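(* Let $\alpha,L>0$, $\tau_0=\alpha/L$, $A_0=1$, and for $k\ge0$ define $a_k=\frac{\tau_k+\sqrt{\tau_k^2+4\tau_kA_k}}{2}$, $\tau_{k+1}=\tau_k+\alpha a_k/L$, $A_{k+1}=A_k+a_k$. Then for all $k\ge0$: (a) $A_k/L=\tau_k/\alpha$; (b) $a_k^2=\tau_kA_{k+1}=\tau_{k+1}A_k$; (c) $A_k\ge\left(1+\frac{\sqrt\alpha}{2\sqrt L}\right)^{2k}$. *)

theory Defs
  imports Complex_Main
begin

fun tauA :: "real \<Rightarrow> real \<Rightarrow> nat \<Rightarrow> real \<times> real" where
  "tauA \<alpha> L 0 = (\<alpha> / L, 1)"
| "tauA \<alpha> L (Suc k) =
     (let (t, A) = tauA \<alpha> L k;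
          a = (t + sqrt (t^2 + 4 * t * A)) / 2
      in (t + \<alpha> * a / L, A + a))"

definition tau_seq :: "real \<Rightarrow> real \<Rightarrow> nat \<Rightarrow> real" where
  "tau_seq \<alpha> L k = fst (tauA \<alpha> L k)"

definition A_seq :: "real \<Rightarrow> real \<Rightarrow> nat \<Rightarrow> real" where
  "A_seq \<alpha> L k = snd (tauA \<alpha> L k)"

definition a_seq :: "real \<Rightarrow> real \<Rightarrow> nat \<Rightarrow> real" where
  "a_seq \<alpha> L k = (tau_seq \<alpha> L k + sqrt ((tau_seq \<alpha> L k)^2 + 4 * tau_seq \<alpha> L k * A_seq \<alpha> L k)) / 2"

end

theory Submission
  imports Defs
begin

text \<open>With \<open>q = \<alpha>/L\<close>, the recursion is homogeneous of degree one in \<open>(\<tau>\<^sub>k, A\<^sub>k)\<close> and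
  preserves the ratio \<open>\<tau>\<^sub>k = q A\<^sub>k\<close>; hence \<open>a\<^sub>k = c A\<^sub>k\<close> for the fixed number
  \<open>c = (q + \<surd>(q\<^sup>2 + 4q))/2\<close>, and \<open>A\<^sub>k = (1 + c)\<^sup>k\<close>, \<open>\<tau>\<^sub>k = q (1 + c)\<^sup>k\<close>.
  The identities (b) reduce to \<open>c\<^sup>2 = q (1 + c)\<close>, which defines \<open>c\<close> as a root, and (c) to
  \<open>1 + c \<ge> 1 + \<surd>q + q/2 \<ge> (1 + \<surd>q/2)\<^sup>2\<close>, using \<open>\<surd>(q\<^sup>2 + 4q) \<ge> 2\<surd>q\<close>.\<close>

definition growth_root :: "real \<Rightarrow> real" where
  "growth_root q = (q + sqrt (q\<^sup>2 + 4 * q)) / 2"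

lemma growth_root_nonneg: "0 \<le> q \<Longrightarrow> 0 \<le> growth_root q"
  by (simp add: growth_root_def)

lemma growth_root_square:
  assumes "0 \<le> q"
  shows "(growth_root q)\<^sup>2 = q * (1 + growth_root q)"
proof -
  have "(sqrt (q\<^sup>2 + 4 * q))\<^sup>2 = q\<^sup>2 + 4 * q"
    using assms by simp
  then show ?thesis
    by (simp add: growth_root_def power2_eq_square algebra_simps)
qed

lemma growth_root_lower_bound:
  assumes "0 \<le> q"
  shows "(1 + sqrt q / 2)\<^sup>2 \<le> 1 + growth_root q"
proof -
  have "2 * sqrt q = sqrt (4 * q)"
    by (simp add: real_sqrt_mult)
  also have "\<dots> \<le> sqrt (q\<^sup>2 + 4 * q)"
    by simp
  finally have "q / 2 + sqrt q \<le> growth_root q"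
    by (simp add: growth_root_def)
  moreover have "(1 + sqrt q / 2)\<^sup>2 = 1 + sqrt q + q / 4"
    using assms by (simp add: power2_eq_square algebra_simps)
  ultimately show ?thesis
    using assms by linarith
qed

lemma growth_root_homogeneous:
  assumes "0 \<le> B"
  shows "(q * B + sqrt ((q * B)\<^sup>2 + 4 * (q * B) * B)) / 2 = B * growth_root q"
proof -
  have "(q * B)\<^sup>2 + 4 * (q * B) * B = B\<^sup>2 * (q\<^sup>2 + 4 * q)"
    by (simp add: power2_eq_square algebra_simps)
  then have "sqrt ((q * B)\<^sup>2 + 4 * (q * B) * B) = B * sqrt (q\<^sup>2 + 4 * q)"
    using assms by (simp add: real_sqrt_mult)
  then show ?thesis
    by (simp add: growth_root_def algebra_simps)
qed

lemma tauA_closed_form: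
  assumes "0 \<le> \<alpha> / L"
  shows "tauA \<alpha> L k = (\<alpha> / L * (1 + growth_root (\<alpha> / L)) ^ k, (1 + growth_root (\<alpha> / L)) ^ k)"
proof (induction k)
  case 0
  then show ?case by simp
next
  case (Suc k)
  let ?q = "\<alpha> / L" and ?B = "(1 + growth_root (\<alpha> / L)) ^ k"
  have "0 \<le> ?B"
    using growth_root_nonneg[OF assms] by simp
  then have "(?q * ?B + sqrt ((?q * ?B)\<^sup>2 + 4 * (?q * ?B) * ?B)) / 2 = ?B * growth_root ?q"
    by (rule growth_root_homogeneous)
  then have "tauA \<alpha> L (Suc k) = (?q * ?B + \<alpha> * (?B * growth_root ?q) / L, ?B + ?B * growth_root ?q)"
    using Suc by (simp only: tauA.simps Let_def split)
  then show ?case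
    by (simp add: algebra_simps)
qed

lemma
  assumes "0 \<le> \<alpha> / L"
  shows tau_seq_closed_form: "tau_seq \<alpha> L k = \<alpha> / L * (1 + growth_root (\<alpha> / L)) ^ k"
    and A_seq_closed_form: "A_seq \<alpha> L k = (1 + growth_root (\<alpha> / L)) ^ k"
    and a_seq_closed_form: "a_seq \<alpha> L k = growth_root (\<alpha> / L) * (1 + growth_root (\<alpha> / L)) ^ k"
proof -
  show tau: "tau_seq \<alpha> L k = \<alpha> / L * (1 + growth_root (\<alpha> / L)) ^ k"
    and A: "A_seq \<alpha> L k = (1 + growth_root (\<alpha> / L)) ^ k"
    using tauA_closed_form[OF assms] by (simp_all add: tau_seq_def A_seq_def)
  have "0 \<le> (1 + growth_root (\<alpha> / L)) ^ k"
    using growth_root_nonneg[OF assms] by simp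
  then show "a_seq \<alpha> L k = growth_root (\<alpha> / L) * (1 + growth_root (\<alpha> / L)) ^ k"
    unfolding a_seq_def tau A by (subst growth_root_homogeneous) (simp_all add: mult.commute)
qed

theorem lemmaD2:
  fixes \<alpha> L :: real and k :: nat
  assumes "\<alpha> > 0" and "L > 0"
  shows "A_seq \<alpha> L k / L = tau_seq \<alpha> L k / \<alpha>
    \<and> (a_seq \<alpha> L k)^2 = tau_seq \<alpha> L k * A_seq \<alpha> L (Suc k)
    \<and> (a_seq \<alpha> L k)^2 = tau_seq \<alpha> L (Suc k) * A_seq \<alpha> L k
    \<and> A_seq \<alpha> L k \<ge> (1 + sqrt \<alpha> / (2 * sqrt L)) ^ (2 * k)"
proof -
  define q where "q = \<alpha> / L"
  define c where "c = growth_root q"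
  have q: "0 \<le> q"
    using assms by (simp add: q_def)
  have closed_forms:
    "tau_seq \<alpha> L k = q * (1 + c) ^ k" "tau_seq \<alpha> L (Suc k) = q * (1 + c) ^ Suc k"
    "A_seq \<alpha> L k = (1 + c) ^ k" "A_seq \<alpha> L (Suc k) = (1 + c) ^ Suc k"
    "a_seq \<alpha> L k = c * (1 + c) ^ k"
    using q unfolding q_def c_def
    by (simp_all only: tau_seq_closed_form A_seq_closed_form a_seq_closed_form)
  have c_square: "c\<^sup>2 = q * (1 + c)"
    unfolding c_def using q by (rule growth_root_square)
  have a_square: "(c * (1 + c) ^ k)\<^sup>2 = q * (1 + c) ^ k * (1 + c) ^ Suc k"
    unfolding power_mult_distrib c_square by (simp add: power2_eq_square)
  have sqrt_ratio: "sqrt \<alpha> / (2 * sqrt L) = sqrt q / 2"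
    by (simp add: q_def real_sqrt_divide)
  have A_bound: "(1 + sqrt \<alpha> / (2 * sqrt L)) ^ (2 * k) \<le> (1 + c) ^ k"
    unfolding power_mult sqrt_ratio c_def by (rule power_mono[OF growth_root_lower_bound[OF q]]) simp
  show ?thesis
    using assms a_square A_bound unfolding closed_forms q_def by (simp add: mult_ac)
qed

end
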